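(* The $R$-algebra $\mathcal H_{n,r}$ is isomorphic to the $R$-algebra with generators $g_1,\ldots,g_{n-1}$ and $b_{\mathbf k}$ for $\mathbf k\in[1,r]^n$, subject to the defining relations (1) $g_ig_j=g_jg_i$ for $|i-j|>1$; (2) $g_ig_{i+1}g_i=g_{i+1}g_ig_{i+1}$ for $1\le i\le n-2$; (3) $g_i^2=1+(q-q^{-1})e_ig_i$ for $1\le i\le n-1$, where $e_i:=\sum_{\mathbf k,\ k_i=k_{i+1}}b_{\mathbf k}$; (4) $b_{\mathbf k}b_{\mathbf k'}=\delta_{\mathbf k,\mathbf k'}b_{\mathbf k}$ for all $\mathbf k,\mathbf k'\in[1,r]^n$; (5) $g_ib_{\mathbf k}=b_{s_i.\mathbf k}g_i$ for $1\le i\le n-1$, $\mathbf k\in[1,r]^n$; (6) $\sum_{\mathbf k\in[1,r]^n}b_{\mathbf k}=1$. The isomorphism sends $g_i\mapsto T_i+B'_{i,i+1}$ and $b_{\mathbf k}\mapsto \prod_{i=1}^n\prod_{1\le j\le r,\,j\ne k_i}\frac{t_i-u_j}{u_{k_i}-u_j}$. (In particular, this presentation does not involve $u_1,\ldots,u_r$.)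
   Context: Standing setup: $R$ is an integral domain, $n\ge 1$, $r\ge 1$, and $q,u_1,\ldots,u_r\in R$ with $q$ invertible in $R$ and $\Delta:=\prod_{1\le j<i\le r}(u_i-u_j)$ invertible in $R$. For $1\le c\le r$ let $F_c(X)\in R[X]$ be the unique polynomial of degree $\le r-1$ with $F_c(u_{c'})=\delta_{c,c'}\Delta$ for all $1\le c'\le r$. The modified Ariki–Koike (Shoji) algebra $\mathcal H_{n,r}=\mathcal H_{n,r}(R,q,u_1,\ldots,u_r)$ is the associative $R$-algebra generated by $t_1,\ldots,t_n,T_1,\ldots,T_{n-1}$ subject to: $(T_i-q)(T_i+q^{-1})=0$; $(t_i-u_1)\cdots(t_i-u_r)=0$; $T_iT_{i+1}T_i=T_{i+1}T_iT_{i+1}$; $T_iT_j=T_jT_i$ for $|i-j|\ge2$; $t_it_j=t_jt_i$; $T_jt_k=t_kT_j$ for $k\ne j,j+1$; and for $2\le j\le n$: $T_{j-1}t_j=t_{j-1}T_{j-1}+\Delta^{-2}\sum_{1\le c_1<c_2\le r}(u_{c_2}-u_{c_1})(q-q^{-1})F_{c_1}(t_{j-1})F_{c_2}(t_j)$ and $T_{j-1}t_{j-1}=t_jT_{j-1}-\Delta^{-2}\sum_{1\le c_1<c_2\le r}(u_{c_2}-u_{c_1})(q-q^{-1})F_{c_1}(t_{j-1})F_{c_2}(t_j)$. Write $[1,r]=\{1,\ldots,r\}$; in $\mathcal H_{n,r}$, $B'_{i,j}:=-(q-q^{-1})\sum_{\mathbf k,\ k_i<k_j}\prod_{l=1}^n\prod_{m\ne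 k_l}\frac{t_l-u_m}{u_{k_l}-u_m}$. For $\mathbf k\in[1,r]^n$ and $1\le i\le n-1$, $s_i.\mathbf k$ denotes $\mathbf k$ with entries $i$ and $i+1$ swapped. *)

theory Defs
  imports "HOL-Computational_Algebra.Polynomial" "HOL-Library.FuncSet"
begin

definition rinv :: "'a::comm_ring_1 \<Rightarrow> 'a" where
  "rinv x = (SOME y. x * y = 1)"

text \<open>An R-algebra structure on a (possibly noncommutative) ring 'b:
  a unital ring homomorphism from R into the centre of 'b.\<close>
definition R_algebra :: "('a::comm_ring_1 \<Rightarrow> 'b::ring_1) \<Rightarrow> bool" where
  "R_algebra \<iota> \<longleftrightarrow> \<iota> 1 = 1 \<and> (\<forall>x y. \<iota> (x + y) = \<iota> x + \<iota> y)
     \<and> (\<forall>x y. \<iota> (x * y) = \<iota> x * \<iota> y) \<and> (\<forall>x z. \<iota> x * z = z * \<iota> x)"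

definition Vdelta :: "nat \<Rightarrow> (nat \<Rightarrow> 'a::comm_ring_1) \<Rightarrow> 'a" where
  "Vdelta r u = (\<Prod>(i,j)\<in>{(i,j). 1 \<le> j \<and> j < i \<and> i \<le> r}. u i - u j)"

definition Fpol :: "nat \<Rightarrow> (nat \<Rightarrow> 'a::comm_ring_1) \<Rightarrow> nat \<Rightarrow> 'a poly" where
  "Fpol r u c = (THE p. degree p \<le> r - 1 \<and>
      (\<forall>c'\<in>{1..r}. poly p (u c') = (if c = c' then Vdelta r u else 0)))"

definition polyA :: "('a::comm_ring_1 \<Rightarrow> 'b::ring_1) \<Rightarrow> 'a poly \<Rightarrow> 'b \<Rightarrow> 'b" where
  "polyA \<iota> p x = (\<Sum>i\<le>degree p. \<iota> (coeff p i) * x ^ i)"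

definition Kset :: "nat \<Rightarrow> nat \<Rightarrow> (nat \<Rightarrow> nat) set" where
  "Kset n r = PiE {1..n} (\<lambda>_. {1..r})"

definition sact :: "nat \<Rightarrow> (nat \<Rightarrow> nat) \<Rightarrow> (nat \<Rightarrow> nat)" where
  "sact i k = (\<lambda>j. if j = i then k (i+1) else if j = i+1 then k i else k j)"

definition bprod :: "('a::comm_ring_1 \<Rightarrow> 'b::ring_1) \<Rightarrow> nat \<Rightarrow> nat \<Rightarrow> (nat \<Rightarrow> 'a)
    \<Rightarrow> (nat \<Rightarrow> 'b) \<Rightarrow> (nat \<Rightarrow> nat) \<Rightarrow> 'b" where
  "bprod \<iota> n r u t k = prod_list (map (\<lambda>l. prod_list (map (\<lambda>m. (t l - \<iota> (u m)) * \<iota> (rinv (u (k l) - u m)))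
        (filter (\<lambda>m. m \<noteq> k l) [1..<r+1]))) [1..<n+1])"

definition Bprime :: "('a::comm_ring_1 \<Rightarrow> 'b::ring_1) \<Rightarrow> nat \<Rightarrow> nat \<Rightarrow> 'a \<Rightarrow> (nat \<Rightarrow> 'a)
    \<Rightarrow> (nat \<Rightarrow> 'b) \<Rightarrow> nat \<Rightarrow> nat \<Rightarrow> 'b" where
  "Bprime \<iota> n r q u t i j = - (\<iota> (q - rinv q)) *
      (\<Sum>k\<in>{k\<in>Kset n r. k i < k j}. bprod \<iota> n r u t k)"

definition Hcorr :: "('a::comm_ring_1 \<Rightarrow> 'b::ring_1) \<Rightarrow> nat \<Rightarrow> 'a \<Rightarrow> (nat \<Rightarrow> 'a)
    \<Rightarrow> (nat \<Rightarrow> 'b) \<Rightarrow> nat \<Rightarrow> 'b" where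
  "Hcorr \<iota> r q u t j = \<iota> (rinv (Vdelta r u ^ 2)) *
     (\<Sum>(c1,c2)\<in>{(c1,c2). 1 \<le> c1 \<and> c1 < c2 \<and> c2 \<le> r}.
        \<iota> ((u c2 - u c1) * (q - rinv q)) * polyA \<iota> (Fpol r u c1) (t (j-1)) * polyA \<iota> (Fpol r u c2) (t j))"

definition H_rels :: "('a::comm_ring_1 \<Rightarrow> 'b::ring_1) \<Rightarrow> nat \<Rightarrow> nat \<Rightarrow> 'a \<Rightarrow> (nat \<Rightarrow> 'a)
    \<Rightarrow> (nat \<Rightarrow> 'b) \<Rightarrow> (nat \<Rightarrow> 'b) \<Rightarrow> bool" where
  "H_rels \<iota> n r q u t T \<longleftrightarrow>
     (\<forall>i\<in>{1..n-1}. (T i - \<iota> q) * (T i + \<iota> (rinv q)) = 0)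
   \<and> (\<forall>i\<in>{1..n}. prod_list (map (\<lambda>c. t i - \<iota> (u c)) [1..<r+1]) = 0)
   \<and> (\<forall>i\<in>{1..n-2}. T i * T (i+1) * T i = T (i+1) * T i * T (i+1))
   \<and> (\<forall>i\<in>{1..n-1}. \<forall>j\<in>{1..n-1}. (i + 2 \<le> j \<or> j + 2 \<le> i) \<longrightarrow> T i * T j = T j * T i)
   \<and> (\<forall>i\<in>{1..n}. \<forall>j\<in>{1..n}. t i * t j = t j * t i)
   \<and> (\<forall>j\<in>{1..n-1}. \<forall>k\<in>{1..n}. k \<noteq> j \<and> k \<noteq> j+1 \<longrightarrow> T j * t k = t k * T j)
   \<and> (\<forall>j\<in>{2..n}. T (j-1) * t j = t (j-1) * T (j-1) + Hcorr \<iota> r q u t j)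
   \<and> (\<forall>j\<in>{2..n}. T (j-1) * t (j-1) = t j * T (j-1) - Hcorr \<iota> r q u t j)"

text \<open>Homomorphisms H_{n,r} -> A, i.e. solutions of the relations, normalised to 0 outside the index ranges.\<close>
definition H_sols :: "('a::comm_ring_1 \<Rightarrow> 'b::ring_1) \<Rightarrow> nat \<Rightarrow> nat \<Rightarrow> 'a \<Rightarrow> (nat \<Rightarrow> 'a)
    \<Rightarrow> ((nat \<Rightarrow> 'b) \<times> (nat \<Rightarrow> 'b)) set" where
  "H_sols \<iota> n r q u = {(t, T). H_rels \<iota> n r q u t T
      \<and> (\<forall>i. i \<notin> {1..n} \<longrightarrow> t i = 0) \<and> (\<forall>i. i \<notin> {1..n-1} \<longrightarrow> T i = 0)}"

definition e_idem :: "nat \<Rightarrow> nat \<Rightarrow> ((nat \<Rightarrow> nat) \<Rightarrow> 'b::ring_1) \<Rightarrow> nat \<Rightarrow> 'b" where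
  "e_idem n r b i = (\<Sum>k\<in>{k\<in>Kset n r. k i = k (i+1)}. b k)"

definition G_rels :: "('a::comm_ring_1 \<Rightarrow> 'b::ring_1) \<Rightarrow> nat \<Rightarrow> nat \<Rightarrow> 'a
    \<Rightarrow> (nat \<Rightarrow> 'b) \<Rightarrow> ((nat \<Rightarrow> nat) \<Rightarrow> 'b) \<Rightarrow> bool" where
  "G_rels \<iota> n r q g b \<longleftrightarrow>
     (\<forall>i\<in>{1..n-1}. \<forall>j\<in>{1..n-1}. (i + 2 \<le> j \<or> j + 2 \<le> i) \<longrightarrow> g i * g j = g j * g i)
   \<and> (\<forall>i\<in>{1..n-2}. g i * g (i+1) * g i = g (i+1) * g i * g (i+1))
   \<and> (\<forall>i\<in>{1..n-1}. g i ^ 2 = 1 + \<iota> (q - rinv q) * e_idem n r b i * g i)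
   \<and> (\<forall>k\<in>Kset n r. \<forall>k'\<in>Kset n r. b k * b k' = (if k = k' then b k else 0))
   \<and> (\<forall>i\<in>{1..n-1}. \<forall>k\<in>Kset n r. g i * b k = b (sact i k) * g i)
   \<and> (\<Sum>k\<in>Kset n r. b k) = 1"

definition G_sols :: "('a::comm_ring_1 \<Rightarrow> 'b::ring_1) \<Rightarrow> nat \<Rightarrow> nat \<Rightarrow> 'a
    \<Rightarrow> ((nat \<Rightarrow> 'b) \<times> ((nat \<Rightarrow> nat) \<Rightarrow> 'b)) set" where
  "G_sols \<iota> n r q = {(g, b). G_rels \<iota> n r q g b
      \<and> (\<forall>i. i \<notin> {1..n-1} \<longrightarrow> g i = 0) \<and> (\<forall>k. k \<notin> Kset n r \<longrightarrow> b k = 0)}"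

definition Phi :: "('a::comm_ring_1 \<Rightarrow> 'b::ring_1) \<Rightarrow> nat \<Rightarrow> nat \<Rightarrow> 'a \<Rightarrow> (nat \<Rightarrow> 'a)
    \<Rightarrow> (nat \<Rightarrow> 'b) \<times> (nat \<Rightarrow> 'b) \<Rightarrow> (nat \<Rightarrow> 'b) \<times> ((nat \<Rightarrow> nat) \<Rightarrow> 'b)" where
  "Phi \<iota> n r q u = (\<lambda>(t, T).
     ((\<lambda>i. if i \<in> {1..n-1} then T i + Bprime \<iota> n r q u t i (i+1) else 0),
      (\<lambda>k. if k \<in> Kset n r then bprod \<iota> n r u t k else 0)))"

end

theory Submission
  imports Defs
begin

(* Both presentations are compared inside the commutative subalgebra spanned by a complete
   family of orthogonal idempotents b_k, k in [1,r]^n.  Starting from H_{n,r}, the t_l commute and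
   are annihilated by (X - u_1)...(X - u_r), so the Lagrange basis polynomials evaluated at t_l are
   orthogonal idempotents summing to 1; their products over l give the b_k, and
   t_l = sum_k u_{k_l} b_k.  Conversely, given the b_k, this formula defines the t_l.  Then t_l,
   B'_{i,i+1}, e_i and the correction terms of H_{n,r} are all of the form sum_k f(k) b_k, and such
   elements multiply pointwise in k.  With g_i = T_i + B'_{i,i+1}, the twisting relation
   g_i b_k = b_{s_i.k} g_i is equivalent to the mixed relations between T_i and the t_l, and under
   it the quadratic, far-commutation and braid relations of the g_i and of the T_i correspond to
   each other through ring identities whose extra terms vanish pointwise. *)

section \<open>Products and ring identities\<close>

declare upt_Suc[simp del]

lemma rinv_right: "\<exists>y. x * y = 1 \<Longrightarrow> x * rinv x = (1::'a::comm_ring_1)"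
  unfolding rinv_def by (rule someI_ex)

lemma rinv_left: "\<exists>y. x * y = 1 \<Longrightarrow> rinv x * x = (1::'a::comm_ring_1)"
  using rinv_right[of x] by (simp only: mult.commute)

lemma prod_list_eq_0: "x \<in> set xs \<Longrightarrow> f x = (0::'b::ring_1) \<Longrightarrow> (\<Prod>y\<leftarrow>xs. f y) = 0"
  by (induction xs) auto

lemma prod_list_eq_1: "(\<And>x. x \<in> set xs \<Longrightarrow> f x = (1::'b::monoid_mult)) \<Longrightarrow> (\<Prod>y\<leftarrow>xs. f y) = 1"
  by (induction xs) auto

lemma prod_list_indicator:
  "(\<Prod>x\<leftarrow>xs. if P x then 1 else 0) = (if \<forall>x\<in>set xs. P x then 1 else (0::'a::semiring_1))"
  by (induction xs) auto

lemma prod_list_twist: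
  assumes "\<And>x. x \<in> set xs \<Longrightarrow> g * f x = h x * g"
  shows "g * (\<Prod>x\<leftarrow>xs. f x) = (\<Prod>x\<leftarrow>xs. h x) * (g::'b::monoid_mult)"
  using assms
proof (induction xs)
  case (Cons a xs)
  have "g * (\<Prod>x\<leftarrow>a # xs. f x) = (g * f a) * (\<Prod>x\<leftarrow>xs. f x)"
    by (simp add: mult.assoc)
  also have "\<dots> = h a * ((\<Prod>x\<leftarrow>xs. h x) * g)"
    using Cons by (simp add: mult.assoc)
  finally show ?case by (simp add: mult.assoc)
qed simp

lemma prod_list_commute:
  "(\<And>x. x \<in> set xs \<Longrightarrow> f x * z = z * f x) \<Longrightarrow>
    (\<Prod>x\<leftarrow>xs. f x) * z = z * (\<Prod>x\<leftarrow>xs. f x :: 'b::monoid_mult)"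
  using prod_list_twist[of xs z f f] by metis

lemma prod_list_mult_commuting:
  assumes "\<And>x y. x \<in> set xs \<Longrightarrow> y \<in> set xs \<Longrightarrow> f x * g y = g y * f x"
  shows "(\<Prod>x\<leftarrow>xs. f x) * (\<Prod>x\<leftarrow>xs. g x) = (\<Prod>x\<leftarrow>xs. f x * g x :: 'b::monoid_mult)"
  using assms
proof (induction xs)
  case (Cons a xs)
  have commute_g: "(\<Prod>x\<leftarrow>xs. f x) * g a = g a * (\<Prod>x\<leftarrow>xs. f x)"
    by (rule prod_list_commute) (use Cons.prems in auto)
  have "(\<Prod>x\<leftarrow>a # xs. f x) * (\<Prod>x\<leftarrow>a # xs. g x)
      = f a * (((\<Prod>x\<leftarrow>xs. f x) * g a) * (\<Prod>x\<leftarrow>xs. g x))"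
    by (simp add: mult.assoc)
  also have "\<dots> = (f a * g a) * ((\<Prod>x\<leftarrow>xs. f x) * (\<Prod>x\<leftarrow>xs. g x))"
    unfolding commute_g by (simp add: mult.assoc)
  finally show ?case using Cons by simp
qed simp

lemma prod_list_factor_scale:
  assumes "l \<in> set xs" and "\<And>x. x \<in> set xs \<Longrightarrow> z * f x = f x * z"
    and "z * f l = c * f l" and "\<And>w. c * w = w * c"
  shows "z * (\<Prod>x\<leftarrow>xs. f x) = c * (\<Prod>x\<leftarrow>xs. f x :: 'b::monoid_mult)"
  using assms
proof (induction xs)
  case (Cons a xs)
  show ?case
  proof (cases "a = l")
    case True
    then show ?thesis
      using Cons.prems by (simp add: mult.assoc[symmetric])
  next
    case False
    then have IH: "z * (\<Prod>x\<leftarrow>xs. f x) = c * (\<Prod>x\<leftarrow>xs. f x)"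
      using Cons by simp
    have "z * (\<Prod>x\<leftarrow>a # xs. f x) = f a * (z * (\<Prod>x\<leftarrow>xs. f x))"
      using Cons.prems(2)[of a] by (simp add: mult.assoc[symmetric])
    also have "\<dots> = f a * (c * (\<Prod>x\<leftarrow>xs. f x))"
      unfolding IH ..
    also have "\<dots> = c * (\<Prod>x\<leftarrow>a # xs. f x)"
      using Cons.prems(4)[of "f a"] by (simp add: mult.assoc[symmetric])
    finally show ?thesis .
  qed
qed simp

lemma eq_iff_of_diff_eq: "a - b = c - d \<Longrightarrow> a = b \<longleftrightarrow> c = (d::'b::ab_group_add)"
  by (metis eq_iff_diff_eq_0)

lemma shifted_quadratic_expand:
  fixes g B B' Q Q' :: "'b::ring_1"
  assumes "g * B = B' * g" and "Q * Q' = 1" and "g * Q' = Q' * g" and "B * Q' = Q' * B"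
  shows "(g - B - Q) * (g - B + Q') = g * g - (B' + B + (Q - Q')) * g + (B * B + (Q - Q') * B) - 1"
proof -
  have "(g - B - Q) * (g - B + Q') = g*g - g*B + g*Q' - B*g + B*B - B*Q' - Q*g + Q*B - Q*Q'"
    by (simp add: algebra_simps)
  also have "\<dots> = g*g - B'*g + Q'*g - B*g + B*B - Q'*B - Q*g + Q*B - 1"
    by (simp only: assms)
  also have "\<dots> = g * g - (B' + B + (Q - Q')) * g + (B * B + (Q - Q') * B) - 1"
    by (simp add: algebra_simps)
  finally show ?thesis .
qed

lemma commutator_of_shifts:
  fixes a b x y :: "'b::ring_1"
  assumes "a * y = y * a" "b * x = x * b" "x * y = y * x"
  shows "(a - x) * (b - y) - (b - y) * (a - x) = a * b - b * a"
proof -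
  have "(a - x) * (b - y) - (b - y) * (a - x) = a*b - a*y - x*b + x*y - (b*a - b*x - y*a + y*x)"
    by (simp add: algebra_simps)
  also have "\<dots> = a * b - b * a"
    using assms by (simp add: algebra_simps)
  finally show ?thesis .
qed

lemma braid_defect_of_shifts:
  fixes a b x y x1 y1 x2 y2 Ea Eb :: "'b::ring_1"
  assumes h1: "a * x = x1 * a" and h2: "a * y = y1 * a" and h3: "b * x = x2 * b" and h4: "b * y = y2 * b"
    and h5: "a * x2 = y * a" and h6: "b * y1 = x * b"
    and h7: "a * a = 1 + Ea * a" and h8: "b * b = 1 + Eb * b"
    and c3: "y1 = x2" and c4: "y1 * x1 + x * y = y1 * Ea + y * y1"
    and c5: "x * x2 + x2 * Eb = x2 * y2 + y * x" and c6: "x * y * x = y * x * y"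
  shows "(a - x) * (b - y) * (a - x) - (b - y) * (a - x) * (b - y) = a * b * a - b * a * b"
proof -
  have e1: "(a - x) * (b - y) * (a - x) = a*b*a - a*b*x - a*y*a + a*y*x - x*b*a + x*b*x + x*y*a - x*y*x"
    by (simp add: algebra_simps)
  have f1: "a*b*x = y*a*b" using h3 h5 by (metis mult.assoc)
  have f2: "a*y*a = y1 + y1*Ea*a" using h2 h7 by (simp add: mult.assoc distrib_left)
  have f3: "a*y*x = y1*x1*a" using h1 h2 by (metis mult.assoc)
  have f4: "x*b*x = x*x2*b" using h3 by (metis mult.assoc)
  have e2: "(b - y) * (a - x) * (b - y) = b*a*b - b*a*y - b*x*b + b*x*y - y*a*b + y*a*y + y*x*b - y*x*y"
    by (simp add: algebra_simps)
  have g1: "b*a*y = x*b*a" using h2 h6 by (metis mult.assoc)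
  have g2: "b*x*b = x2 + x2*Eb*b" using h3 h8 by (simp add: mult.assoc distrib_left)
  have g3: "b*x*y = x2*y2*b" using h3 h4 by (metis mult.assoc)
  have g4: "y*a*y = y*y1*a" using h2 by (metis mult.assoc)
  have "(a - x) * (b - y) * (a - x) - (b - y) * (a - x) * (b - y)
     = (a*b*a - y*a*b - (y1 + y1*Ea*a) + y1*x1*a - x*b*a + x*x2*b + x*y*a - x*y*x)
     - (b*a*b - x*b*a - (x2 + x2*Eb*b) + x2*y2*b - y*a*b + y*y1*a + y*x*b - y*x*y)"
    unfolding e1 e2 f1 f2 f3 f4 g1 g2 g3 g4 ..
  also have "\<dots> = a*b*a - b*a*b + ((y1*x1 + x*y) - (y1*Ea + y*y1)) * a
       + ((x*x2 + x2*Eb) - (x2*y2 + y*x)) * b + (y*x*y - x*y*x) + (x2 - y1)"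
    by (simp add: algebra_simps)
  also have "\<dots> = a*b*a - b*a*b"
    using c3 c4 c5 c6 by simp
  finally show ?thesis .
qed

lemma ball_atLeastAtMost_shift:
  "(\<forall>j\<in>{2..n}. P (j - 1) j) \<longleftrightarrow> (\<forall>i\<in>{1..n - 1}. P i (i + 1 :: nat))"
proof
  assume shifted: "\<forall>j\<in>{2..n}. P (j - 1) j"
  show "\<forall>i\<in>{1..n - 1}. P i (i + 1)"
  proof
    fix i
    assume "i \<in> {1..n - 1}"
    then have "i + 1 \<in> {2..n}"
      by auto
    then show "P i (i + 1)"
      using shifted by fastforce
  qed
next
  assume unshifted: "\<forall>i\<in>{1..n - 1}. P i (i + 1)"
  show "\<forall>j\<in>{2..n}. P (j - 1) j"
  proof
    fix j
    assume "j \<in> {2..n}"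
    then have "j - 1 \<in> {1..n - 1}" "j - 1 + 1 = j"
      by auto
    then show "P (j - 1) j"
      using unshifted by metis
  qed
qed

section \<open>Polynomial evaluation in an R-algebra\<close>

locale algebra_map =
  fixes \<iota> :: "'a::idom \<Rightarrow> 'b::ring_1"
  assumes R_algebra: "R_algebra \<iota>"
begin

lemma hom_one[simp]: "\<iota> 1 = 1"
  and hom_add[simp]: "\<iota> (x + y) = \<iota> x + \<iota> y"
  and hom_mult[simp]: "\<iota> (x * y) = \<iota> x * \<iota> y"
  and central: "\<iota> x * z = z * \<iota> x"
  using R_algebra unfolding R_algebra_def by blast+

lemma hom_zero[simp]: "\<iota> 0 = 0"
  using hom_add[of 0 0] by simp

lemma hom_uminus[simp]: "\<iota> (- x) = - \<iota> x"
  using hom_add[of "- x" x] by (simp add: eq_neg_iff_add_eq_0)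

lemma hom_diff[simp]: "\<iota> (x - y) = \<iota> x - \<iota> y"
  using hom_add[of x "- y"] by simp

lemma hom_sum: "\<iota> (sum f A) = (\<Sum>x\<in>A. \<iota> (f x))"
  by (induction A rule: infinite_finite_induct) auto

lemma central_left_commute: "z * (\<iota> x * w) = \<iota> x * (z * w)"
  by (metis central mult.assoc)

lemma polyA_conv_sum_lessThan:
  assumes "degree p < N"
  shows "polyA \<iota> p x = (\<Sum>i<N. \<iota> (coeff p i) * x ^ i)"
  unfolding polyA_def
  by (rule sum.mono_neutral_left) (use assms in \<open>auto simp: coeff_eq_0\<close>)

lemma polyA_0[simp]: "polyA \<iota> 0 x = 0"
  unfolding polyA_def by simp

lemma polyA_add: "polyA \<iota> (p + q) x = polyA \<iota> p x + polyA \<iota> q x"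
proof -
  define N where "N = Suc (max (degree p) (degree q))"
  have "degree (p + q) < N"
    using degree_add_le_max[of p q] unfolding N_def by linarith
  then have "polyA \<iota> (p + q) x = (\<Sum>i<N. \<iota> (coeff p i) * x ^ i) + (\<Sum>i<N. \<iota> (coeff q i) * x ^ i)"
    by (simp add: polyA_conv_sum_lessThan distrib_right sum.distrib)
  also have "\<dots> = polyA \<iota> p x + polyA \<iota> q x"
    by (subst (1 2) polyA_conv_sum_lessThan[where N = N]) (auto simp: N_def)
  finally show ?thesis .
qed

lemma polyA_pCons: "polyA \<iota> (pCons a p) x = \<iota> a + x * polyA \<iota> p x"
proof -
  define N where "N = Suc (degree p)"
  have "degree (pCons a p) < Suc N"
    unfolding N_def using degree_pCons_le[of a p] by linarith
  then have "polyA \<iota> (pCons a p) x = \<iota> a + (\<Sum>i<N. \<iota> (coeff p i) * x ^ Suc i)"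
    by (simp add: polyA_conv_sum_lessThan sum.lessThan_Suc_shift del: sum.lessThan_Suc)
  also have "(\<Sum>i<N. \<iota> (coeff p i) * x ^ Suc i) = x * (\<Sum>i<N. \<iota> (coeff p i) * x ^ i)"
    unfolding sum_distrib_left by (rule sum.cong) (auto simp: central_left_commute mult.assoc)
  also have "(\<Sum>i<N. \<iota> (coeff p i) * x ^ i) = polyA \<iota> p x"
    by (rule polyA_conv_sum_lessThan[symmetric]) (simp add: N_def)
  finally show ?thesis .
qed

lemma polyA_const[simp]: "polyA \<iota> [:a:] x = \<iota> a"
  by (simp add: polyA_pCons)

lemma polyA_1[simp]: "polyA \<iota> 1 x = 1"
  by (simp add: one_pCons)

lemma polyA_linear[simp]: "polyA \<iota> [:a, 1:] x = \<iota> a + x"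
  by (simp add: polyA_pCons)

lemma polyA_smult: "polyA \<iota> (smult a p) x = \<iota> a * polyA \<iota> p x"
  by (induction p) (auto simp: polyA_pCons distrib_left central_left_commute)

lemma polyA_mult: "polyA \<iota> (p * q) x = polyA \<iota> p x * polyA \<iota> q x"
  by (induction p) (simp_all add: polyA_add polyA_smult polyA_pCons distrib_right mult.assoc)

lemma polyA_diff: "polyA \<iota> (p - q) x = polyA \<iota> p x - polyA \<iota> q x"
  using polyA_add[of "p - q" q x] by (simp add: eq_diff_eq)

lemma polyA_sum: "polyA \<iota> (sum f A) x = (\<Sum>a\<in>A. polyA \<iota> (f a) x)"
  by (induction A rule: infinite_finite_induct) (auto simp: polyA_add)

lemma polyA_prod_list: "polyA \<iota> (\<Prod>a\<leftarrow>xs. f a) x = (\<Prod>a\<leftarrow>xs. polyA \<iota> (f a) x)"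
  by (induction xs) (auto simp: polyA_mult)

lemma polyA_commute:
  assumes "x * z = z * x"
  shows "polyA \<iota> p x * z = z * polyA \<iota> p x"
proof (induction p)
  case (pCons a p)
  have "x * polyA \<iota> p x * z = z * (x * polyA \<iota> p x)"
    using assms pCons.IH by (metis mult.assoc)
  then show ?case by (simp add: polyA_pCons distrib_left distrib_right central)
qed simp

end

section \<open>Lagrange interpolation at the nodes\<close>

lemma poly_prod_list_map: "poly (\<Prod>x\<leftarrow>xs. f x) y = (\<Prod>x\<leftarrow>xs. poly (f x) y)"
  by (induction xs) auto

lemma linear_factors_dvd:
  fixes f :: "'a::idom poly"
  assumes "distinct xs" and "\<forall>x\<in>set xs. poly f x = 0"
  shows "(\<Prod>x\<leftarrow>xs. [:- x, 1:]) dvd f"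
  using assms
proof (induction xs arbitrary: f)
  case (Cons x xs)
  then obtain g where g: "f = [:- x, 1:] * g"
    using poly_eq_0_iff_dvd by (metis dvdE list.set_intros(1))
  have "poly g y = 0" if "y \<in> set xs" for y
    using Cons.prems that g by auto
  then have "(\<Prod>x\<leftarrow>xs. [:- x, 1:]) dvd g"
    using Cons by simp
  then show ?case
    unfolding g by (simp only: list.map prod_list.Cons) (rule mult_dvd_mono[OF dvd_refl])
qed simp

definition lagrange_basis :: "nat \<Rightarrow> (nat \<Rightarrow> 'a::comm_ring_1) \<Rightarrow> nat \<Rightarrow> 'a poly" where
  "lagrange_basis r u c = (\<Prod>m\<leftarrow>filter (\<lambda>m. m \<noteq> c) [1..<r+1]. [:- u m, 1:] * [:rinv (u c - u m):])"

locale distinct_nodes =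
  fixes r :: nat and u :: "nat \<Rightarrow> 'a::idom"
  assumes Vdelta_unit: "\<exists>y. Vdelta r u * y = 1"
begin

lemma node_diff_unit:
  assumes "a \<in> {1..r}" "c \<in> {1..r}" "a \<noteq> c"
  shows "\<exists>y. (u a - u c) * y = 1"
proof -
  have factor_unit: "\<exists>y. (u a - u c) * y = 1" if "1 \<le> c" "c < a" "a \<le> r" for a c
  proof -
    define S where "S = {(i, j). 1 \<le> j \<and> j < i \<and> i \<le> r}"
    have "finite S"
      unfolding S_def by (rule finite_subset[of _ "{..r} \<times> {..r}"]) auto
    moreover have "(a, c) \<in> S"
      using that unfolding S_def by auto
    ultimately have "Vdelta r u = (u a - u c) * (\<Prod>(i, j)\<in>S - {(a, c)}. u i - u j)"
      unfolding Vdelta_def S_def[symmetric] by (simp add: prod.remove)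
    with Vdelta_unit obtain y where "(u a - u c) * (\<Prod>(i, j)\<in>S - {(a, c)}. u i - u j) * y = 1"
      by auto
    then show ?thesis
      by (metis mult.assoc)
  qed
  show ?thesis
  proof (cases "c < a")
    case False
    then obtain y where "(u c - u a) * y = 1"
      using factor_unit[of a c] assms by auto
    then have "(u a - u c) * (- y) = 1"
      by (simp add: algebra_simps)
    then show ?thesis ..
  qed (use factor_unit[of c a] assms in auto)
qed

lemma nodes_inj: "inj_on u {1..r}"
  using node_diff_unit by (metis inj_onI mult_zero_left right_minus_eq zero_neq_one)

lemma lagrange_factor_prod:
  assumes "a \<in> {1..r}" "c \<in> {1..r}"
  shows "(\<Prod>m\<leftarrow>filter (\<lambda>m. m \<noteq> c) [1..<r+1]. (u a - u m) * rinv (u c - u m))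
    = (if a = c then 1 else 0)"
proof (cases "a = c")
  case True
  have "(u c - u m) * rinv (u c - u m) = 1" if "m \<in> {1..r}" "m \<noteq> c" for m
    using rinv_right node_diff_unit assms that by blast
  then show ?thesis
    using True assms by (subst prod_list_eq_1) auto
next
  case False
  then show ?thesis
    using assms by (subst prod_list_eq_0[of a]) auto
qed

lemma poly_lagrange_basis:
  assumes "a \<in> {1..r}" "c \<in> {1..r}"
  shows "poly (lagrange_basis r u c) (u a) = (if a = c then 1 else 0)"
proof -
  have factor: "(\<lambda>m. poly ([:- u m, 1:] * [:rinv (u c - u m):]) (u a)) = (\<lambda>m. (u a - u m) * rinv (u c - u m))"
    by (simp add: fun_eq_iff algebra_simps)
  show ?thesis
    by (simp only: lagrange_basis_def poly_prod_list_map factor lagrange_factor_prod[OF assms])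
qed

lemma degree_lagrange_basis:
  assumes "c \<in> {1..r}"
  shows "degree (lagrange_basis r u c) \<le> r - 1"
proof -
  let ?ms = "filter (\<lambda>m. m \<noteq> c) [1..<r+1]"
  have linear: "degree ([:- u m, 1:] * [:rinv (u c - u m):]) \<le> 1" for m
  proof -
    have "[:- u m, 1:] * [:rinv (u c - u m):] = smult (rinv (u c - u m)) [:- u m, 1:]"
      by (simp add: mult.commute)
    then show ?thesis
      using degree_smult_le[of "rinv (u c - u m)" "[:- u m, 1:]"] by simp
  qed
  have "degree (lagrange_basis r u c) \<le> (\<Sum>m\<leftarrow>?ms. degree ([:- u m, 1:] * [:rinv (u c - u m):]))"
    unfolding lagrange_basis_def by (rule order_trans[OF degree_prod_list_le]) (simp only: map_map o_def order_refl)
  also have "\<dots> \<le> (\<Sum>m\<leftarrow>?ms. 1)"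
    by (rule sum_list_mono) (rule linear)
  also have "\<dots> = length ?ms"
    by (simp add: sum_list_triv)
  also have "length ?ms < length [1..<r+1]"
    by (rule length_filter_less) (use assms in auto)
  finally show ?thesis
    by simp
qed

lemma Fpol_eq_smult_lagrange_basis:
  assumes "c \<in> {1..r}"
  shows "Fpol r u c = smult (Vdelta r u) (lagrange_basis r u c)"
  unfolding Fpol_def
proof (rule the_equality)
  let ?L = "smult (Vdelta r u) (lagrange_basis r u c)"
  have degree_L: "degree ?L \<le> r - 1"
    using order_trans[OF degree_smult_le degree_lagrange_basis[OF assms]] .
  then show "degree ?L \<le> r - 1 \<and> (\<forall>c'\<in>{1..r}. poly ?L (u c') = (if c = c' then Vdelta r u else 0))"
    using poly_lagrange_basis assms by auto
  fix p
  assume p: "degree p \<le> r - 1 \<and> (\<forall>c'\<in>{1..r}. poly p (u c') = (if c = c' then Vdelta r u else 0))"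
  have "card (u ` {1..r}) = r" "r \<ge> 1"
    using card_image[OF nodes_inj] assms by auto
  then show "p = ?L"
    using p degree_L poly_lagrange_basis assms by (intro poly_eqI_degree[of "u ` {1..r}"]) auto
qed

lemma poly_Fpol:
  "c \<in> {1..r} \<Longrightarrow> c' \<in> {1..r} \<Longrightarrow> poly (Fpol r u c) (u c') = (if c = c' then Vdelta r u else 0)"
  by (simp add: Fpol_eq_smult_lagrange_basis poly_lagrange_basis)

lemma pair_sum_Vdelta_collapse:
  assumes "a \<in> {1..r}" "c \<in> {1..r}"
  shows "rinv ((Vdelta r u)\<^sup>2) * (\<Sum>(c1, c2)\<in>{(c1, c2). 1 \<le> c1 \<and> c1 < c2 \<and> c2 \<le> r}.
      (u c2 - u c1) * x * (if a = c1 then Vdelta r u else 0) * (if c = c2 then Vdelta r u else 0))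
    = (if a < c then x * (u c - u a) else 0)"
proof -
  define P where "P = {(c1, c2). 1 \<le> c1 \<and> c1 < c2 \<and> c2 \<le> r}"
  let ?V = "Vdelta r u"
  have "finite P"
    unfolding P_def by (rule finite_subset[of _ "{..r} \<times> {..r}"]) auto
  have "(\<Sum>(c1, c2)\<in>P. (u c2 - u c1) * x * (if a = c1 then ?V else 0) * (if c = c2 then ?V else 0))
      = (\<Sum>p\<in>P. if p = (a, c) then (u c - u a) * x * ?V\<^sup>2 else 0)"
    by (rule sum.cong) (auto simp: power2_eq_square split: if_split_asm)
  also have "\<dots> = ?V\<^sup>2 * (if a < c then x * (u c - u a) else 0)"
    using assms \<open>finite P\<close> by (simp add: P_def mult_ac)
  finally show ?thesis
    using Vdelta_unit rinv_left[of "?V\<^sup>2"]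
    by (simp add: P_def mult.assoc[symmetric]) (metis power_mult_distrib power_one)
qed

lemma node_factors_dvd:
  "\<forall>c\<in>{1..r}. poly f (u c) = 0 \<Longrightarrow> (\<Prod>c\<leftarrow>[1..<r+1]. [:- u c, 1:]) dvd f"
proof -
  have "distinct (map u [1..<r+1])"
    using nodes_inj by (simp add: distinct_map atLeastLessThanSuc_atLeastAtMost)
  then show "\<forall>c\<in>{1..r}. poly f (u c) = 0 \<Longrightarrow> ?thesis"
    using linear_factors_dvd[of "map u [1..<r+1]" f] by (auto simp: map_map o_def)
qed

end

section \<open>Complete families of orthogonal idempotents\<close>

locale orthogonal_idempotents = algebra_map \<iota>
  for \<iota> :: "'a::idom \<Rightarrow> 'b::ring_1" +
  fixes K :: "'k set" and b :: "'k \<Rightarrow> 'b"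
  assumes finite_index: "finite K"
    and idem_orth: "\<And>k k'. k \<in> K \<Longrightarrow> k' \<in> K \<Longrightarrow> b k * b k' = (if k = k' then b k else 0)"
    and idem_sum: "(\<Sum>k\<in>K. b k) = 1"
begin

definition diag :: "('k \<Rightarrow> 'a) \<Rightarrow> 'b" where
  "diag f = (\<Sum>k\<in>K. \<iota> (f k) * b k)"

lemma diag_cong: "(\<And>k. k \<in> K \<Longrightarrow> f k = g k) \<Longrightarrow> diag f = diag g"
  unfolding diag_def by (rule sum.cong) auto

lemma diag_add: "diag (\<lambda>k. f k + g k) = diag f + diag g"
  unfolding diag_def by (simp add: distrib_right sum.distrib)

lemma diag_uminus: "diag (\<lambda>k. - f k) = - diag f"
  unfolding diag_def by (simp add: sum_negf)

lemma diag_diff: "diag (\<lambda>k. f k - g k) = diag f - diag g"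
  unfolding diag_def by (simp add: left_diff_distrib sum_subtractf)

lemma diag_const: "diag (\<lambda>k. a) = \<iota> a"
  unfolding diag_def by (simp add: sum_distrib_left[symmetric] idem_sum)

lemma diag_zero: "diag (\<lambda>k. 0) = 0"
  using diag_const[of 0] by simp

lemma diag_one: "diag (\<lambda>k. 1) = 1"
  using diag_const[of 1] by simp

lemma diag_mult: "diag f * diag g = diag (\<lambda>k. f k * g k)"
proof -
  have "\<iota> (f k) * b k * (\<iota> (g k') * b k') = (if k' = k then \<iota> (f k * g k) * b k else 0)"
    if "k \<in> K" "k' \<in> K" for k k'
    using idem_orth[OF that] central_left_commute[of "b k" "g k'" "b k'"]
    by (simp add: mult.assoc)
  then have "diag f * diag g = (\<Sum>k\<in>K. \<Sum>k'\<in>K. if k' = k then \<iota> (f k * g k) * b k else 0)"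
    unfolding diag_def sum_product by (intro sum.cong) auto
  then show ?thesis
    unfolding diag_def by (simp add: sum.delta finite_index)
qed

lemma diag_commute: "diag f * diag g = diag g * diag f"
  by (simp add: diag_mult mult.commute)

lemma diag_scale: "\<iota> a * diag f = diag (\<lambda>k. a * f k)"
  using diag_mult[of "\<lambda>k. a" f] by (simp add: diag_const)

lemma sum_filter_eq_diag: "(\<Sum>k\<in>{k\<in>K. P k}. b k) = diag (\<lambda>k. if P k then 1 else 0)"
proof -
  have "diag (\<lambda>k. if P k then 1 else 0) = (\<Sum>k\<in>K. if P k then b k else 0)"
    unfolding diag_def by (rule sum.cong) auto
  then show ?thesis
    by (simp add: sum.inter_filter finite_index)
qed

lemma diag_indicator: "k0 \<in> K \<Longrightarrow> diag (\<lambda>k. if k = k0 then 1 else 0) = b k0"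
proof -
  assume "k0 \<in> K"
  then have "{k \<in> K. k = k0} = {k0}"
    by auto
  then show ?thesis
    using sum_filter_eq_diag[of "\<lambda>k. k = k0"] by simp
qed

lemma diag_sum: "(\<Sum>x\<in>A. diag (f x)) = diag (\<lambda>k. \<Sum>x\<in>A. f x k)"
  unfolding diag_def by (simp add: hom_sum sum_distrib_right) (rule sum.swap)

lemma diag_prod_list: "(\<Prod>x\<leftarrow>xs. diag (f x)) = diag (\<lambda>k. \<Prod>x\<leftarrow>xs. f x k)"
  by (induction xs) (auto simp: diag_one diag_mult)

lemma polyA_diag: "polyA \<iota> p (diag f) = diag (\<lambda>k. poly p (f k))"
proof (induction p)
  case (pCons a p)
  have "polyA \<iota> (pCons a p) (diag f) = diag (\<lambda>k. a) + diag f * diag (\<lambda>k. poly p (f k))"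
    by (simp only: polyA_pCons diag_const pCons.IH)
  then show ?case
    by (simp add: diag_mult diag_add)
qed (simp add: diag_zero)

lemma diag_twist:
  assumes \<sigma>: "\<And>k. k \<in> K \<Longrightarrow> \<sigma> k \<in> K \<and> \<sigma> (\<sigma> k) = k"
    and twist: "\<And>k. k \<in> K \<Longrightarrow> g * b k = b (\<sigma> k) * g"
  shows "g * diag f = diag (\<lambda>k. f (\<sigma> k)) * g"
proof -
  have "g * diag f = (\<Sum>k\<in>K. \<iota> (f k) * b (\<sigma> k)) * g"
    unfolding diag_def sum_distrib_left sum_distrib_right
    by (rule sum.cong) (simp_all add: central_left_commute twist mult.assoc)
  also have "(\<Sum>k\<in>K. \<iota> (f k) * b (\<sigma> k)) = diag (\<lambda>k. f (\<sigma> k))"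
    unfolding diag_def by (rule sum.reindex_bij_witness[where i = \<sigma> and j = \<sigma>]) (auto simp: \<sigma>)
  finally show ?thesis .
qed

end

section \<open>Both presentations over a diagonal frame\<close>

lemma mem_Kset_iff:
  "k \<in> Kset n r \<longleftrightarrow> (\<forall>l\<in>{1..n}. k l \<in> {1..r}) \<and> (\<forall>l. l \<notin> {1..n} \<longrightarrow> k l = undefined)"
  unfolding Kset_def PiE_iff extensional_def by auto

lemma Kset_eq_iff: "k \<in> Kset n r \<Longrightarrow> k' \<in> Kset n r \<Longrightarrow> k = k' \<longleftrightarrow> (\<forall>l\<in>{1..n}. k l = k' l)"
  unfolding mem_Kset_iff by (auto simp: fun_eq_iff)

lemma finite_Kset[simp]: "finite (Kset n r)"
  unfolding Kset_def by (rule finite_PiE) auto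

definition swap_adj :: "nat \<Rightarrow> nat \<Rightarrow> nat" where
  "swap_adj i l = (if l = i then i + 1 else if l = i + 1 then i else l)"

lemma sact_apply: "sact i k l = k (swap_adj i l)"
  unfolding sact_def swap_adj_def by simp

lemma swap_adj_swap_adj[simp]: "swap_adj i (swap_adj i l) = l"
  unfolding swap_adj_def by auto

lemma swap_adj_in_range: "i \<in> {1..n-1} \<Longrightarrow> l \<in> {1..n} \<Longrightarrow> swap_adj i l \<in> {1..n}"
  unfolding swap_adj_def by auto

lemma sact_in_Kset: "i \<in> {1..n-1} \<Longrightarrow> k \<in> Kset n r \<Longrightarrow> sact i k \<in> Kset n r"
  unfolding mem_Kset_iff sact_def by auto

lemma sact_sact[simp]: "sact i (sact i k) = k"
  unfolding sact_def by (auto simp: fun_eq_iff)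

locale diagonal_frame = orthogonal_idempotents \<iota> "Kset n r" b + distinct_nodes r u
  for \<iota> :: "'a::idom \<Rightarrow> 'b::ring_1" and n r b u +
  fixes q :: 'a and t :: "nat \<Rightarrow> 'b"
  assumes q_unit: "\<exists>y. q * y = 1"
    and t_eq_sum: "\<And>l. l \<in> {1..n} \<Longrightarrow> t l = (\<Sum>k\<in>Kset n r. \<iota> (u (k l)) * b k)"
begin

abbreviation "K \<equiv> Kset n r"

abbreviation "qd \<equiv> q - rinv q"

abbreviation Bfun :: "nat \<Rightarrow> (nat \<Rightarrow> nat) \<Rightarrow> 'a" where
  "Bfun i k \<equiv> if k i < k (i+1) then - qd else 0"

abbreviation twists :: "'b \<Rightarrow> nat \<Rightarrow> bool" where
  "twists g i \<equiv> \<forall>k\<in>K. g * b k = b (sact i k) * g"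

abbreviation far_commuting :: "(nat \<Rightarrow> 'b) \<Rightarrow> bool" where
  "far_commuting x \<equiv> \<forall>i\<in>{1..n-1}. \<forall>j\<in>{1..n-1}. (i + 2 \<le> j \<or> j + 2 \<le> i) \<longrightarrow> x i * x j = x j * x i"

abbreviation braided :: "(nat \<Rightarrow> 'b) \<Rightarrow> bool" where
  "braided x \<equiv> \<forall>i\<in>{1..n-2}. x i * x (i+1) * x i = x (i+1) * x i * x (i+1)"

abbreviation cross_rels :: "'b \<Rightarrow> nat \<Rightarrow> bool" where
  "cross_rels Ti i \<equiv> Ti * t (i+1) = t i * Ti + Hcorr \<iota> r q u t (i+1)
     \<and> Ti * t i = t (i+1) * Ti - Hcorr \<iota> r q u t (i+1)
     \<and> (\<forall>l\<in>{1..n}. l \<noteq> i \<and> l \<noteq> i+1 \<longrightarrow> Ti * t l = t l * Ti)"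

lemma t_eq_diag: "l \<in> {1..n} \<Longrightarrow> t l = diag (\<lambda>k. u (k l))"
  unfolding diag_def by (rule t_eq_sum)

lemma bprod_comp_eq_diag:
  assumes \<phi>: "\<And>l. l \<in> {1..n} \<Longrightarrow> \<phi> l \<in> {1..n}" and k0: "k0 \<in> K"
  shows "bprod \<iota> n r u (t \<circ> \<phi>) k0 = diag (\<lambda>k. if \<forall>l\<in>{1..n}. k (\<phi> l) = k0 l then 1 else 0)"
proof -
  have factor: "(t (\<phi> l) - \<iota> (u m)) * \<iota> (rinv (u (k0 l) - u m))
      = diag (\<lambda>k. (u (k (\<phi> l)) - u m) * rinv (u (k0 l) - u m))" if "l \<in> {1..n}" for l m
    using t_eq_diag[OF \<phi>[OF that]]
    by (simp add: diag_diff diag_const diag_mult[symmetric])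
  have "bprod \<iota> n r u (t \<circ> \<phi>) k0 = (\<Prod>l\<leftarrow>[1..<n+1]. diag (\<lambda>k.
      \<Prod>m\<leftarrow>filter (\<lambda>m. m \<noteq> k0 l) [1..<r+1]. (u (k (\<phi> l)) - u m) * rinv (u (k0 l) - u m)))"
    unfolding bprod_def o_apply
    by (intro arg_cong[where f = prod_list] map_cong refl) (simp add: factor diag_prod_list)
  also have "\<dots> = diag (\<lambda>k. \<Prod>l\<leftarrow>[1..<n+1]. if k (\<phi> l) = k0 l then 1 else 0)"
    unfolding diag_prod_list
  proof (intro diag_cong arg_cong[where f = prod_list] map_cong refl)
    fix k l
    assume "k \<in> K" "l \<in> set [1..<n+1]"
    then have "k (\<phi> l) \<in> {1..r}" "k0 l \<in> {1..r}"
      using k0 \<phi> unfolding mem_Kset_iff by auto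
    then show "(\<Prod>m\<leftarrow>filter (\<lambda>m. m \<noteq> k0 l) [1..<r+1]. (u (k (\<phi> l)) - u m) * rinv (u (k0 l) - u m))
        = (if k (\<phi> l) = k0 l then 1 else 0)"
      by (rule lagrange_factor_prod)
  qed
  finally show ?thesis
    by (simp add: prod_list_indicator atLeastLessThanSuc_atLeastAtMost)
qed

lemma bprod_eq_idem: "k0 \<in> K \<Longrightarrow> bprod \<iota> n r u t k0 = b k0"
  using bprod_comp_eq_diag[of id k0] Kset_eq_iff diag_indicator
  by (simp cong: diag_cong)

lemma Bprime_eq_diag: "Bprime \<iota> n r q u t i j = diag (\<lambda>k. if k i < k j then - qd else 0)"
proof -
  have "(\<Sum>k\<in>{k\<in>K. k i < k j}. bprod \<iota> n r u t k) = (\<Sum>k\<in>{k\<in>K. k i < k j}. b k)"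
    by (rule sum.cong) (auto simp: bprod_eq_idem)
  then have "Bprime \<iota> n r q u t i j = \<iota> (- qd) * diag (\<lambda>k. if k i < k j then 1 else 0)"
    unfolding Bprime_def by (simp add: sum_filter_eq_diag)
  also have "\<dots> = diag (\<lambda>k. if k i < k j then - qd else 0)"
    unfolding diag_scale by (rule diag_cong) simp
  finally show ?thesis .
qed

lemma e_idem_eq_diag: "\<iota> qd * e_idem n r b i = diag (\<lambda>k. if k i = k (i+1) then qd else 0)"
  unfolding e_idem_def sum_filter_eq_diag diag_scale by (intro diag_cong) simp

lemma polyA_Fpol_t:
  assumes "c \<in> {1..r}" "l \<in> {1..n}"
  shows "polyA \<iota> (Fpol r u c) (t l) = diag (\<lambda>k. if k l = c then Vdelta r u else 0)"
  unfolding t_eq_diag[OF assms(2)] polyA_diag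
  using assms poly_Fpol by (intro diag_cong) (auto simp: mem_Kset_iff)

lemma Hcorr_eq_diag:
  assumes j: "j \<in> {2..n}"
  shows "Hcorr \<iota> r q u t j = diag (\<lambda>k. if k (j-1) < k j then qd * (u (k j) - u (k (j-1))) else 0)"
proof -
  define P where "P = {(c1, c2). 1 \<le> c1 \<and> c1 < c2 \<and> c2 \<le> r}"
  let ?V = "Vdelta r u"
  let ?term = "\<lambda>c1 c2 k. (u c2 - u c1) * qd * (if k (j-1) = c1 then ?V else 0) * (if k j = c2 then ?V else 0)"
  have j_range: "j - 1 \<in> {1..n}" "j \<in> {1..n}"
    using j by auto
  have "\<iota> ((u c2 - u c1) * qd) * polyA \<iota> (Fpol r u c1) (t (j-1)) * polyA \<iota> (Fpol r u c2) (t j)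
      = diag (?term c1 c2)" if "(c1, c2) \<in> P" for c1 c2
  proof -
    have "c1 \<in> {1..r}" "c2 \<in> {1..r}"
      using that unfolding P_def by auto
    then show ?thesis
      unfolding polyA_Fpol_t[OF \<open>c1 \<in> {1..r}\<close> j_range(1)] polyA_Fpol_t[OF \<open>c2 \<in> {1..r}\<close> j_range(2)]
      by (simp only: mult.assoc diag_mult diag_scale)
  qed
  then have "Hcorr \<iota> r q u t j = \<iota> (rinv (?V\<^sup>2)) * (\<Sum>(c1, c2)\<in>P. diag (?term c1 c2))"
    unfolding Hcorr_def P_def[symmetric] by (intro arg_cong[where f = "\<lambda>x. _ * x"] sum.cong) auto
  also have "\<dots> = diag (\<lambda>k. rinv (?V\<^sup>2) * (\<Sum>(c1, c2)\<in>P. ?term c1 c2 k))"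
    by (simp only: split_def diag_sum diag_scale)
  also have "\<dots> = diag (\<lambda>k. if k (j-1) < k j then qd * (u (k j) - u (k (j-1))) else 0)"
  proof (rule diag_cong)
    fix k
    assume "k \<in> K"
    then have "k (j-1) \<in> {1..r}" "k j \<in> {1..r}"
      using j_range unfolding mem_Kset_iff by blast+
    then show "rinv (?V\<^sup>2) * (\<Sum>(c1, c2)\<in>P. ?term c1 c2 k)
        = (if k (j-1) < k j then qd * (u (k j) - u (k (j-1))) else 0)"
      unfolding P_def by (rule pair_sum_Vdelta_collapse)
  qed
  finally show ?thesis .
qed

lemma twist_t_of_twist_b:
  assumes i: "i \<in> {1..n-1}" and twist: "\<And>k. k \<in> K \<Longrightarrow> g * b k = b (sact i k) * g"
    and l: "l \<in> {1..n}"
  shows "g * t l = t (swap_adj i l) * g"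
  using diag_twist[of "sact i" g "\<lambda>k. u (k l)"] twist
    t_eq_diag[OF l] t_eq_diag[OF swap_adj_in_range[OF i l]]
  by (simp add: sact_in_Kset[OF i] sact_apply)

lemma twist_b_of_twist_t:
  assumes i: "i \<in> {1..n-1}" and twist: "\<And>l. l \<in> {1..n} \<Longrightarrow> g * t l = t (swap_adj i l) * g"
    and k: "k \<in> K"
  shows "g * b k = b (sact i k) * g"
proof -
  have factor: "g * ((t l - \<iota> a) * \<iota> c) = ((t (swap_adj i l) - \<iota> a) * \<iota> c) * g"
    if "l \<in> {1..n}" for l a c
  proof -
    have "g * ((t l - \<iota> a) * \<iota> c) = (g * t l - g * \<iota> a) * \<iota> c"
      by (simp add: algebra_simps)
    also have "\<dots> = (t (swap_adj i l) * g - \<iota> a * g) * \<iota> c"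
      using twist[OF that] central by simp
    also have "\<dots> = (t (swap_adj i l) - \<iota> a) * (g * \<iota> c)"
      by (simp add: algebra_simps)
    also have "\<dots> = ((t (swap_adj i l) - \<iota> a) * \<iota> c) * g"
      using central by (simp add: mult.assoc)
    finally show ?thesis .
  qed
  have "g * bprod \<iota> n r u t k = bprod \<iota> n r u (t \<circ> swap_adj i) k * g"
    unfolding bprod_def o_apply by (intro prod_list_twist factor) auto
  moreover have "bprod \<iota> n r u (t \<circ> swap_adj i) k = b (sact i k)"
  proof -
    have "(\<forall>l\<in>{1..n}. k' (swap_adj i l) = k l) \<longleftrightarrow> k' = sact i k" if "k' \<in> K" for k'
      using Kset_eq_iff[OF that sact_in_Kset[OF i k]] swap_adj_in_range[OF i]
      unfolding sact_apply by (metis swap_adj_swap_adj)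
    then show ?thesis
      using bprod_comp_eq_diag[OF swap_adj_in_range[OF i] k] diag_indicator[OF sact_in_Kset[OF i k]]
      by (simp cong: diag_cong)
  qed
  ultimately show ?thesis
    using bprod_eq_idem[OF k] by simp
qed

lemma twist_b_iff_twist_t:
  "i \<in> {1..n-1} \<Longrightarrow> twists g i \<longleftrightarrow> (\<forall>l\<in>{1..n}. g * t l = t (swap_adj i l) * g)"
  using twist_t_of_twist_b twist_b_of_twist_t by blast

lemma twist_t_at_iff:
  assumes i: "i \<in> {1..n-1}" and G: "G = Ti + Bprime \<iota> n r q u t i (i+1)" and l: "l \<in> {1..n}"
  shows "G * t l = t (swap_adj i l) * G \<longleftrightarrow>
    Ti * t l = t (swap_adj i l) * Ti - diag (\<lambda>k. Bfun i k * (u (k l) - u (k (swap_adj i l))))"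
proof (rule eq_iff_of_diff_eq)
  have "diag (Bfun i) * t l - t (swap_adj i l) * diag (Bfun i)
      = diag (\<lambda>k. Bfun i k * (u (k l) - u (k (swap_adj i l))))"
    unfolding t_eq_diag[OF l] t_eq_diag[OF swap_adj_in_range[OF i l]] diag_mult diag_diff[symmetric]
    by (rule diag_cong) (simp add: algebra_simps)
  moreover have "G = Ti + diag (Bfun i)"
    using G Bprime_eq_diag by simp
  ultimately show "G * t l - t (swap_adj i l) * G
      = Ti * t l - (t (swap_adj i l) * Ti - diag (\<lambda>k. Bfun i k * (u (k l) - u (k (swap_adj i l)))))"
    by (simp add: algebra_simps)
qed

lemma twist_t_iff_cross_relations:
  assumes i: "i \<in> {1..n-1}" and G: "G = Ti + Bprime \<iota> n r q u t i (i+1)"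
  shows "(\<forall>l\<in>{1..n}. G * t l = t (swap_adj i l) * G) \<longleftrightarrow> cross_rels Ti i"
proof -
  have i_range: "i \<in> {1..n}" "i + 1 \<in> {1..n}" "i + 1 \<in> {2..n}"
    using i by auto
  have Hcorr: "Hcorr \<iota> r q u t (i+1) = diag (\<lambda>k. if k i < k (i+1) then qd * (u (k (i+1)) - u (k i)) else 0)"
    using Hcorr_eq_diag[OF i_range(3)] by (simp cong: if_cong)
  have "diag (\<lambda>k. Bfun i k * (u (k (i+1)) - u (k i))) = - Hcorr \<iota> r q u t (i+1)"
    unfolding Hcorr diag_uminus[symmetric] by (rule diag_cong) (simp add: algebra_simps)
  then have at_succ: "G * t (i+1) = t i * G \<longleftrightarrow> Ti * t (i+1) = t i * Ti + Hcorr \<iota> r q u t (i+1)"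
    using twist_t_at_iff[OF i G i_range(2)] by (simp add: swap_adj_def)
  have "diag (\<lambda>k. Bfun i k * (u (k i) - u (k (i+1)))) = Hcorr \<iota> r q u t (i+1)"
    unfolding Hcorr by (rule diag_cong) (simp add: algebra_simps)
  then have at_i: "G * t i = t (i+1) * G \<longleftrightarrow> Ti * t i = t (i+1) * Ti - Hcorr \<iota> r q u t (i+1)"
    using twist_t_at_iff[OF i G i_range(1)] by (simp add: swap_adj_def)
  have elsewhere: "G * t l = t (swap_adj i l) * G \<longleftrightarrow> Ti * t l = t l * Ti"
    if "l \<in> {1..n}" "l \<noteq> i" "l \<noteq> i + 1" for l
    using that twist_t_at_iff[OF i G that(1)] by (simp add: swap_adj_def diag_zero)
  have "(\<forall>l\<in>{1..n}. G * t l = t (swap_adj i l) * G) \<longleftrightarrow>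
      G * t (i+1) = t i * G \<and> G * t i = t (i+1) * G
      \<and> (\<forall>l\<in>{1..n}. l \<noteq> i \<and> l \<noteq> i+1 \<longrightarrow> G * t l = t (swap_adj i l) * G)"
    using i_range by (auto simp: swap_adj_def)
  then show ?thesis
    using at_succ at_i elsewhere by auto
qed

lemma diag_twist_sact: "i \<in> {1..n-1} \<Longrightarrow> twists g i \<Longrightarrow> g * diag f = diag (\<lambda>k. f (sact i k)) * g"
  by (rule diag_twist) (auto simp: sact_in_Kset)

lemma quadratic_iff:
  assumes i: "i \<in> {1..n-1}" and G: "G = Ti + Bprime \<iota> n r q u t i (i+1)" and twist: "twists G i"
  shows "(Ti - \<iota> q) * (Ti + \<iota> (rinv q)) = 0 \<longleftrightarrow> G\<^sup>2 = 1 + \<iota> qd * e_idem n r b i * G"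
proof -
  define B where "B = diag (Bfun i)"
  define B' where "B' = diag (\<lambda>k. Bfun i (sact i k))"
  have T: "Ti = G - B"
    using G Bprime_eq_diag unfolding B_def by simp
  have q_inv: "\<iota> q * \<iota> (rinv q) = 1"
    using rinv_right[OF q_unit] hom_mult hom_one by metis
  have expand: "(G - B - \<iota> q) * (G - B + \<iota> (rinv q)) = G * G - (B' + B + (\<iota> q - \<iota> (rinv q))) * G
      + (B * B + (\<iota> q - \<iota> (rinv q)) * B) - 1"
    by (rule shifted_quadratic_expand[OF _ q_inv])
      (simp_all add: central B_def B'_def diag_twist_sact[OF i twist])
  have "B' + B + (\<iota> q - \<iota> (rinv q)) = diag (\<lambda>k. Bfun i (sact i k) + Bfun i k + qd)"
    unfolding B_def B'_def by (simp only: diag_add diag_const hom_diff)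
  also have "\<dots> = diag (\<lambda>k. if k i = k (i+1) then qd else 0)"
    by (rule diag_cong) (auto simp: sact_def)
  finally have coeff_lin: "B' + B + (\<iota> q - \<iota> (rinv q)) = \<iota> qd * e_idem n r b i"
    by (simp only: e_idem_eq_diag)
  have "B * B + (\<iota> q - \<iota> (rinv q)) * B = diag (\<lambda>k. Bfun i k * Bfun i k + qd * Bfun i k)"
    unfolding B_def by (simp only: diag_add diag_mult diag_scale hom_diff[symmetric])
  also have "\<dots> = diag (\<lambda>k. 0)"
    by (rule diag_cong) (simp add: algebra_simps)
  finally have coeff_const: "B * B + (\<iota> q - \<iota> (rinv q)) * B = 0"
    by (simp only: diag_zero)
  have "(Ti - \<iota> q) * (Ti + \<iota> (rinv q)) - 0 = G\<^sup>2 - (1 + \<iota> qd * e_idem n r b i * G)"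
    unfolding T expand coeff_lin coeff_const by (simp add: power2_eq_square algebra_simps)
  then show ?thesis
    by (rule eq_iff_of_diff_eq)
qed

lemma far_commute_iff:
  assumes i: "i \<in> {1..n-1}" and j: "j \<in> {1..n-1}" and far: "i + 2 \<le> j \<or> j + 2 \<le> i"
    and Gi: "Gi = Ti + Bprime \<iota> n r q u t i (i+1)" and Gj: "Gj = Tj + Bprime \<iota> n r q u t j (j+1)"
    and twist_i: "twists Gi i" and twist_j: "twists Gj j"
  shows "Ti * Tj = Tj * Ti \<longleftrightarrow> Gi * Gj = Gj * Gi"
proof (rule eq_iff_of_diff_eq)
  have "Gi * diag (Bfun j) = diag (Bfun j) * Gi"
    unfolding diag_twist_sact[OF i twist_i] using far by (intro diag_cong arg_cong2[where f = times]) (auto simp: sact_def)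
  moreover have "Gj * diag (Bfun i) = diag (Bfun i) * Gj"
    unfolding diag_twist_sact[OF j twist_j] using far by (intro diag_cong arg_cong2[where f = times]) (auto simp: sact_def)
  ultimately have "(Gi - diag (Bfun i)) * (Gj - diag (Bfun j)) - (Gj - diag (Bfun j)) * (Gi - diag (Bfun i))
      = Gi * Gj - Gj * Gi"
    by (intro commutator_of_shifts diag_commute)
  moreover have "Ti = Gi - diag (Bfun i)" "Tj = Gj - diag (Bfun j)"
    using Gi Gj Bprime_eq_diag by simp_all
  ultimately show "Ti * Tj - Tj * Ti = Gi * Gj - Gj * Gi"
    by simp
qed

lemma braid_iff:
  assumes i: "i \<in> {1..n-2}"
    and Ga: "Ga = Ta + Bprime \<iota> n r q u t i (i+1)" and Gb: "Gb = Tb + Bprime \<iota> n r q u t (i+1) (i+2)"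
    and twist_a: "twists Ga i" and twist_b: "twists Gb (i+1)"
    and quadratic_a: "Ga\<^sup>2 = 1 + \<iota> qd * e_idem n r b i * Ga"
    and quadratic_b: "Gb\<^sup>2 = 1 + \<iota> qd * e_idem n r b (i+1) * Gb"
  shows "Ta * Tb * Ta = Tb * Ta * Tb \<longleftrightarrow> Ga * Gb * Ga = Gb * Ga * Gb"
proof (rule eq_iff_of_diff_eq)
  have ia: "i \<in> {1..n-1}" and ib: "i+1 \<in> {1..n-1}"
    using i by auto
  define x where "x = diag (Bfun i)"
  define y where "y = diag (Bfun (i+1))"
  define x1 where "x1 = diag (\<lambda>k. Bfun i (sact i k))"
  define y1 where "y1 = diag (\<lambda>k. Bfun (i+1) (sact i k))"
  define x2 where "x2 = diag (\<lambda>k. Bfun i (sact (i+1) k))"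
  define y2 where "y2 = diag (\<lambda>k. Bfun (i+1) (sact (i+1) k))"
  define Ea where "Ea = \<iota> qd * e_idem n r b i"
  define Eb where "Eb = \<iota> qd * e_idem n r b (i+1)"
  have "(Ga - x) * (Gb - y) * (Ga - x) - (Gb - y) * (Ga - x) * (Gb - y) = Ga * Gb * Ga - Gb * Ga * Gb"
  proof (rule braid_defect_of_shifts)
    show "Ga * x = x1 * Ga" "Ga * y = y1 * Ga"
      unfolding x_def x1_def y_def y1_def by (simp_all add: diag_twist_sact[OF ia twist_a])
    show "Gb * x = x2 * Gb" "Gb * y = y2 * Gb"
      unfolding x_def x2_def y_def y2_def by (simp_all add: diag_twist_sact[OF ib twist_b])
    show "Ga * x2 = y * Ga"
      unfolding x2_def y_def diag_twist_sact[OF ia twist_a] by (simp add: sact_def cong: diag_cong)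
    show "Gb * y1 = x * Gb"
      unfolding y1_def x_def diag_twist_sact[OF ib twist_b] by (simp add: sact_def cong: diag_cong)
    show "Ga * Ga = 1 + Ea * Ga" "Gb * Gb = 1 + Eb * Gb"
      using quadratic_a quadratic_b unfolding Ea_def Eb_def by (simp_all add: power2_eq_square)
    show "y1 = x2"
      unfolding y1_def x2_def by (rule diag_cong) (simp add: sact_def)
    show "y1 * x1 + x * y = y1 * Ea + y * y1"
      unfolding y1_def x1_def x_def y_def Ea_def e_idem_eq_diag diag_mult diag_add[symmetric]
      by (rule diag_cong) (auto simp: sact_def algebra_simps)
    show "x * x2 + x2 * Eb = x2 * y2 + y * x"
      unfolding x2_def y2_def x_def y_def Eb_def e_idem_eq_diag diag_mult diag_add[symmetric]
      by (rule diag_cong) (auto simp: sact_def algebra_simps)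
    show "x * y * x = y * x * y"
      unfolding x_def y_def diag_mult
      by (rule diag_cong) (auto simp: sact_def algebra_simps)
  qed
  moreover have "Ta = Ga - x" "Tb = Gb - y"
    using Ga Gb Bprime_eq_diag unfolding x_def y_def by (simp_all add: numeral_2_eq_2)
  ultimately show "Ta * Tb * Ta - Tb * Ta * Tb = Ga * Gb * Ga - Gb * Ga * Gb"
    by simp
qed

lemma t_annihilated: "l \<in> {1..n} \<Longrightarrow> (\<Prod>c\<leftarrow>[1..<r+1]. t l - \<iota> (u c)) = 0"
proof -
  assume l: "l \<in> {1..n}"
  have "(\<Prod>c\<leftarrow>[1..<r+1]. t l - \<iota> (u c)) = diag (\<lambda>k. \<Prod>c\<leftarrow>[1..<r+1]. u (k l) - u c)"
    by (simp add: t_eq_diag[OF l] diag_diff diag_const diag_prod_list[symmetric])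
  also have "\<dots> = diag (\<lambda>k. 0)"
  proof (rule diag_cong)
    fix k
    assume "k \<in> K"
    then have "k l \<in> {1..r}"
      using l unfolding mem_Kset_iff by blast
    then show "(\<Prod>c\<leftarrow>[1..<r+1]. u (k l) - u c) = 0"
      by (intro prod_list_eq_0[of "k l"]) auto
  qed
  finally show ?thesis
    by (simp add: diag_zero)
qed

lemma t_commute: "l \<in> {1..n} \<Longrightarrow> l' \<in> {1..n} \<Longrightarrow> t l * t l' = t l' * t l"
  by (simp add: t_eq_diag diag_commute)

lemma H_rels_iff:
  "H_rels \<iota> n r q u t T \<longleftrightarrow> (\<forall>i\<in>{1..n-1}. (T i - \<iota> q) * (T i + \<iota> (rinv q)) = 0)
     \<and> braided T \<and> far_commuting T \<and> (\<forall>i\<in>{1..n-1}. cross_rels (T i) i)"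
proof -
  have t_rels: "\<forall>l\<in>{1..n}. (\<Prod>c\<leftarrow>[1..<r+1]. t l - \<iota> (u c)) = 0"
    "\<forall>l\<in>{1..n}. \<forall>l'\<in>{1..n}. t l * t l' = t l' * t l"
    using t_annihilated t_commute by blast+
  show ?thesis
    unfolding H_rels_def
      ball_atLeastAtMost_shift[where P = "\<lambda>i j. T i * t j = t i * T i + Hcorr \<iota> r q u t j"]
      ball_atLeastAtMost_shift[where P = "\<lambda>i j. T i * t i = t j * T i - Hcorr \<iota> r q u t j"]
    by (simp only: t_rels[THEN eqTrueI] simp_thms ball_conj_distrib conj_ac)
qed

lemma G_rels_iff:
  "G_rels \<iota> n r q g b \<longleftrightarrow> (\<forall>i\<in>{1..n-1}. (g i)\<^sup>2 = 1 + \<iota> qd * e_idem n r b i * g i)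
     \<and> braided g \<and> far_commuting g \<and> (\<forall>i\<in>{1..n-1}. twists (g i) i)"
proof -
  have orth: "\<forall>k\<in>K. \<forall>k'\<in>K. b k * b k' = (if k = k' then b k else 0)"
    using idem_orth by blast
  show ?thesis
    unfolding G_rels_def by (simp only: orth[THEN eqTrueI] idem_sum simp_thms conj_ac)
qed

lemma far_commuting_iff:
  assumes g: "\<And>i. i \<in> {1..n-1} \<Longrightarrow> g i = T i + Bprime \<iota> n r q u t i (i+1)"
    and twists: "\<forall>i\<in>{1..n-1}. twists (g i) i"
  shows "far_commuting T \<longleftrightarrow> far_commuting g"
proof -
  have "T i * T j = T j * T i \<longleftrightarrow> g i * g j = g j * g i"
    if "i \<in> {1..n-1}" "j \<in> {1..n-1}" "i + 2 \<le> j \<or> j + 2 \<le> i" for i j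
    using far_commute_iff[OF that g[OF that(1)] g[OF that(2)]] twists that by blast
  then show ?thesis
    by (intro ball_cong refl) auto
qed

lemma braided_iff:
  assumes g: "\<And>i. i \<in> {1..n-1} \<Longrightarrow> g i = T i + Bprime \<iota> n r q u t i (i+1)"
    and twists: "\<forall>i\<in>{1..n-1}. twists (g i) i"
    and quadratic: "\<forall>i\<in>{1..n-1}. (g i)\<^sup>2 = 1 + \<iota> qd * e_idem n r b i * g i"
  shows "braided T \<longleftrightarrow> braided g"
proof (rule ball_cong[OF refl])
  fix i
  assume i: "i \<in> {1..n-2}"
  have ia: "i \<in> {1..n-1}" and ib: "i + 1 \<in> {1..n-1}"
    using i by auto
  have "g (i+1) = T (i+1) + Bprime \<iota> n r q u t (i+1) (i+2)"
    using g[OF ib] by (simp add: numeral_2_eq_2)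
  with ia ib show "T i * T (i+1) * T i = T (i+1) * T i * T (i+1)
      \<longleftrightarrow> g i * g (i+1) * g i = g (i+1) * g i * g (i+1)"
    using braid_iff[OF i g[OF ia]] twists quadratic by blast
qed

lemma H_rels_iff_G_rels:
  assumes g: "\<And>i. i \<in> {1..n-1} \<Longrightarrow> g i = T i + Bprime \<iota> n r q u t i (i+1)"
  shows "H_rels \<iota> n r q u t T \<longleftrightarrow> G_rels \<iota> n r q g b"
proof -
  have twists_iff: "(\<forall>i\<in>{1..n-1}. twists (g i) i) \<longleftrightarrow> (\<forall>i\<in>{1..n-1}. cross_rels (T i) i)"
    using twist_b_iff_twist_t twist_t_iff_cross_relations g by (intro ball_cong) auto
  show ?thesis
  proof (cases "\<forall>i\<in>{1..n-1}. twists (g i) i")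
    case twists: True
    have quadratic_eq: "(\<forall>i\<in>{1..n-1}. (T i - \<iota> q) * (T i + \<iota> (rinv q)) = 0)
        \<longleftrightarrow> (\<forall>i\<in>{1..n-1}. (g i)\<^sup>2 = 1 + \<iota> qd * e_idem n r b i * g i)"
      using quadratic_iff g twists by (intro ball_cong) auto
    have far_eq: "far_commuting T \<longleftrightarrow> far_commuting g"
      by (rule far_commuting_iff[OF g twists])
    show ?thesis
      unfolding H_rels_iff G_rels_iff quadratic_eq far_eq twists_iff[symmetric]
      using braided_iff[OF g twists] by (intro conj_cong refl) auto
  next
    case False
    then have "\<not> (\<forall>i\<in>{1..n-1}. cross_rels (T i) i)"
      using twists_iff by blast
    with False show ?thesis
      by (simp only: H_rels_iff G_rels_iff simp_thms)
  qed
qed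

end

section \<open>Spectral decomposition of the generators t\<close>

locale annihilated_commuting = algebra_map \<iota> + distinct_nodes r u
  for \<iota> :: "'a::idom \<Rightarrow> 'b::ring_1" and r :: nat and u :: "nat \<Rightarrow> 'a" +
  fixes n :: nat and t :: "nat \<Rightarrow> 'b"
  assumes annihilated: "\<And>l. l \<in> {1..n} \<Longrightarrow> (\<Prod>c\<leftarrow>[1..<r+1]. t l - \<iota> (u c)) = 0"
    and commuting: "\<And>l l'. l \<in> {1..n} \<Longrightarrow> l' \<in> {1..n} \<Longrightarrow> t l * t l' = t l' * t l"
begin

definition proj :: "nat \<Rightarrow> nat \<Rightarrow> 'b" where
  "proj l c = polyA \<iota> (lagrange_basis r u c) (t l)"

lemma bprod_eq_prod_proj: "bprod \<iota> n r u t k = (\<Prod>l\<leftarrow>[1..<n+1]. proj l (k l))"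
proof -
  have "polyA \<iota> ([:- a, 1:] * [:c:]) x = (x - \<iota> a) * \<iota> c" for a c x
    unfolding polyA_mult polyA_linear polyA_const by simp
  then show ?thesis
    unfolding bprod_def proj_def lagrange_basis_def polyA_prod_list by simp
qed

lemma polyA_vanishing:
  assumes l: "l \<in> {1..n}" and f: "\<forall>c\<in>{1..r}. poly f (u c) = 0"
  shows "polyA \<iota> f (t l) = 0"
proof -
  obtain h where h: "f = (\<Prod>c\<leftarrow>[1..<r+1]. [:- u c, 1:]) * h"
    using node_factors_dvd[OF f] by (auto elim: dvdE)
  have "polyA \<iota> (\<Prod>c\<leftarrow>[1..<r+1]. [:- u c, 1:]) (t l) = (\<Prod>c\<leftarrow>[1..<r+1]. t l - \<iota> (u c))"
    unfolding polyA_prod_list by (simp add: algebra_simps)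
  then show ?thesis
    unfolding h polyA_mult annihilated[OF l] by simp
qed

lemma proj_commute_t: "l \<in> {1..n} \<Longrightarrow> l' \<in> {1..n} \<Longrightarrow> proj l c * t l' = t l' * proj l c"
  unfolding proj_def by (rule polyA_commute) (rule commuting)

lemma proj_commute: "l \<in> {1..n} \<Longrightarrow> l' \<in> {1..n} \<Longrightarrow> proj l c * proj l' c' = proj l' c' * proj l c"
  unfolding proj_def[of l' c'] by (rule polyA_commute[symmetric]) (rule proj_commute_t[symmetric])

lemma proj_orth:
  assumes "l \<in> {1..n}" "c \<in> {1..r}" "c' \<in> {1..r}"
  shows "proj l c * proj l c' = (if c = c' then proj l c else 0)"
proof -
  have "polyA \<iota> (lagrange_basis r u c * lagrange_basis r u c' - (if c = c' then lagrange_basis r u c else 0)) (t l) = 0"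
    using assms poly_lagrange_basis by (intro polyA_vanishing) auto
  then show ?thesis
    unfolding proj_def polyA_diff polyA_mult by (auto split: if_splits)
qed

lemma proj_sum: "l \<in> {1..n} \<Longrightarrow> (\<Sum>c\<in>{1..r}. proj l c) = 1"
proof -
  assume l: "l \<in> {1..n}"
  have "(\<Sum>c\<in>{1..r}. poly (lagrange_basis r u c) (u m)) = 1" if m: "m \<in> {1..r}" for m
  proof -
    have "(\<Sum>c\<in>{1..r}. poly (lagrange_basis r u c) (u m)) = (\<Sum>c\<in>{1..r}. if m = c then 1 else 0)"
      by (rule sum.cong) (use m poly_lagrange_basis in auto)
    then show ?thesis
      using m by simp
  qed
  then have "polyA \<iota> ((\<Sum>c\<in>{1..r}. lagrange_basis r u c) - 1) (t l) = 0"
    by (intro polyA_vanishing[OF l]) (simp add: poly_sum)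
  then show ?thesis
    unfolding proj_def polyA_diff polyA_sum by simp
qed

lemma t_mult_proj: "l \<in> {1..n} \<Longrightarrow> c \<in> {1..r} \<Longrightarrow> t l * proj l c = \<iota> (u c) * proj l c"
proof -
  assume l: "l \<in> {1..n}" and c: "c \<in> {1..r}"
  have "polyA \<iota> ([:0, 1:] * lagrange_basis r u c - [:u c:] * lagrange_basis r u c) (t l) = 0"
    using c poly_lagrange_basis by (intro polyA_vanishing[OF l]) auto
  then show ?thesis
    unfolding proj_def polyA_diff polyA_mult by (simp add: polyA_pCons)
qed

lemma bprod_orth:
  assumes k: "k \<in> Kset n r" and k': "k' \<in> Kset n r"
  shows "bprod \<iota> n r u t k * bprod \<iota> n r u t k' = (if k = k' then bprod \<iota> n r u t k else 0)"
proof -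
  have "bprod \<iota> n r u t k * bprod \<iota> n r u t k' = (\<Prod>l\<leftarrow>[1..<n+1]. proj l (k l) * proj l (k' l))"
    unfolding bprod_eq_prod_proj by (rule prod_list_mult_commuting) (auto intro: proj_commute)
  also have "\<dots> = (\<Prod>l\<leftarrow>[1..<n+1]. if k l = k' l then proj l (k l) else 0)"
    using k k' proj_orth unfolding mem_Kset_iff by (intro arg_cong[where f = prod_list] map_cong) auto
  also have "\<dots> = (if k = k' then bprod \<iota> n r u t k else 0)"
  proof (cases "k = k'")
    case False
    then obtain l where "l \<in> {1..n}" "k l \<noteq> k' l"
      using Kset_eq_iff[OF k k'] by blast
    then show ?thesis
      using False by (subst prod_list_eq_0[of l]) auto
  qed (simp add: bprod_eq_prod_proj)
  finally show ?thesis .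
qed

lemma sum_prod_proj_PiE:
  "m \<le> n \<Longrightarrow> (\<Sum>k\<in>PiE {1..m} (\<lambda>_. {1..r}). \<Prod>l\<leftarrow>[1..<m+1]. proj l (k l)) = 1"
proof (induction m)
  case (Suc m)
  let ?P = "PiE {1..m} (\<lambda>_. {1..r})"
  have split: "{1..Suc m} = insert (Suc m) {1..m}" "Suc m \<notin> {1..m}"
    by auto
  have "(\<Sum>k\<in>PiE {1..Suc m} (\<lambda>_. {1..r}). \<Prod>l\<leftarrow>[1..<Suc m+1]. proj l (k l))
      = (\<Sum>(c, k)\<in>{1..r} \<times> ?P. \<Prod>l\<leftarrow>[1..<Suc m+1]. proj l ((k(Suc m := c)) l))"
    unfolding split(1) PiE_insert_eq
    by (subst sum.reindex[OF inj_combinator[OF split(2)]]) (simp add: case_prod_beta)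
  also have "\<dots> = (\<Sum>(c, k)\<in>{1..r} \<times> ?P. (\<Prod>l\<leftarrow>[1..<m+1]. proj l (k l)) * proj (Suc m) c)"
  proof (rule sum.cong[OF refl], clarify)
    fix c k
    have "[1..<Suc m+1] = [1..<m+1] @ [Suc m]"
      by (simp add: upt_Suc)
    moreover have "map (\<lambda>l. proj l ((k(Suc m := c)) l)) [1..<m+1] = map (\<lambda>l. proj l (k l)) [1..<m+1]"
      by (rule map_cong) auto
    ultimately show "(\<Prod>l\<leftarrow>[1..<Suc m+1]. proj l ((k(Suc m := c)) l))
        = (\<Prod>l\<leftarrow>[1..<m+1]. proj l (k l)) * proj (Suc m) c"
      by (simp only: map_append prod_list.append list.map prod_list.Cons prod_list.Nil mult_1_right
          fun_upd_same)
  qed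
  also have "\<dots> = (\<Sum>k\<in>?P. \<Prod>l\<leftarrow>[1..<m+1]. proj l (k l)) * (\<Sum>c\<in>{1..r}. proj (Suc m) c)"
    by (simp add: sum.cartesian_product[symmetric] sum_distrib_left sum_distrib_right)
  also have "\<dots> = 1"
    using Suc proj_sum[of "Suc m"] by simp
  finally show ?case .
qed simp

lemma sum_bprod: "(\<Sum>k\<in>Kset n r. bprod \<iota> n r u t k) = 1"
  unfolding Kset_def bprod_eq_prod_proj by (rule sum_prod_proj_PiE) simp

lemma t_eq_sum_bprod:
  assumes l: "l \<in> {1..n}"
  shows "t l = (\<Sum>k\<in>Kset n r. \<iota> (u (k l)) * bprod \<iota> n r u t k)"
proof -
  have factor: "t l * bprod \<iota> n r u t k = \<iota> (u (k l)) * bprod \<iota> n r u t k" if k: "k \<in> Kset n r" for k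
    unfolding bprod_eq_prod_proj
  proof (rule prod_list_factor_scale)
    show "l \<in> set [1..<n+1]"
      using l by auto
    show "t l * proj l' (k l') = proj l' (k l') * t l" if "l' \<in> set [1..<n+1]" for l'
      using proj_commute_t[of l' l] that l by auto
    show "t l * proj l (k l) = \<iota> (u (k l)) * proj l (k l)"
      using k l by (intro t_mult_proj) (auto simp: mem_Kset_iff)
  qed (rule central)
  have "t l = t l * (\<Sum>k\<in>Kset n r. bprod \<iota> n r u t k)"
    by (simp add: sum_bprod)
  also have "\<dots> = (\<Sum>k\<in>Kset n r. \<iota> (u (k l)) * bprod \<iota> n r u t k)"
    unfolding sum_distrib_left by (rule sum.cong) (simp_all add: factor)
  finally show ?thesis .
qed

end

section \<open>The bijection between the two solution sets\<close>

locale presentation_setting = algebra_map \<iota> + distinct_nodes r u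
  for \<iota> :: "'a::idom \<Rightarrow> 'b::ring_1" and r :: nat and u :: "nat \<Rightarrow> 'a" +
  fixes n :: nat and q :: 'a
  assumes q_unit: "\<exists>y. q * y = 1"
begin

definition t_of :: "((nat \<Rightarrow> nat) \<Rightarrow> 'b) \<Rightarrow> nat \<Rightarrow> 'b" where
  "t_of b l = (if l \<in> {1..n} then \<Sum>k\<in>Kset n r. \<iota> (u (k l)) * b k else 0)"

definition b_of :: "(nat \<Rightarrow> 'b) \<Rightarrow> (nat \<Rightarrow> nat) \<Rightarrow> 'b" where
  "b_of t k = (if k \<in> Kset n r then bprod \<iota> n r u t k else 0)"

definition Phi_inv :: "(nat \<Rightarrow> 'b) \<times> ((nat \<Rightarrow> nat) \<Rightarrow> 'b) \<Rightarrow> (nat \<Rightarrow> 'b) \<times> (nat \<Rightarrow> 'b)" where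
  "Phi_inv = (\<lambda>(g, b). (t_of b, \<lambda>i. if i \<in> {1..n-1} then g i - Bprime \<iota> n r q u (t_of b) i (i+1) else 0))"

lemma Phi_eq:
  "Phi \<iota> n r q u (t, T) = ((\<lambda>i. if i \<in> {1..n-1} then T i + Bprime \<iota> n r q u t i (i+1) else 0), b_of t)"
  unfolding Phi_def b_of_def by simp

lemma frame_of_H_rels:
  assumes "H_rels \<iota> n r q u t T"
  shows "diagonal_frame \<iota> n r (b_of t) u q t"
proof -
  interpret annihilated_commuting \<iota> r u n t
    by unfold_locales (use assms in \<open>auto simp: H_rels_def\<close>)
  show ?thesis
  proof unfold_locales
    show "b_of t k * b_of t k' = (if k = k' then b_of t k else 0)" if "k \<in> Kset n r" "k' \<in> Kset n r" for k k'
      using bprod_orth[OF that] that unfolding b_of_def by simp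
    show "(\<Sum>k\<in>Kset n r. b_of t k) = 1"
      using sum_bprod unfolding b_of_def by simp
    show "t l = (\<Sum>k\<in>Kset n r. \<iota> (u (k l)) * b_of t k)" if "l \<in> {1..n}" for l
      using t_eq_sum_bprod[OF that] unfolding b_of_def by simp
  qed (simp_all add: q_unit)
qed

lemma frame_of_G_rels:
  assumes "G_rels \<iota> n r q g b"
  shows "diagonal_frame \<iota> n r b u q (t_of b)"
  by unfold_locales (use assms in \<open>simp_all add: G_rels_def t_of_def q_unit\<close>)

lemma Phi_in_G_sols: "x \<in> H_sols \<iota> n r q u \<Longrightarrow> Phi \<iota> n r q u x \<in> G_sols \<iota> n r q"
proof (induction x)
  case (Pair t T)
  then have H: "H_rels \<iota> n r q u t T"
    unfolding H_sols_def by simp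
  interpret diagonal_frame \<iota> n r "b_of t" u q t
    by (rule frame_of_H_rels[OF H])
  show ?case
    using H_rels_iff_G_rels[of "\<lambda>i. if i \<in> {1..n-1} then T i + Bprime \<iota> n r q u t i (i+1) else 0" T] H
    unfolding Phi_eq G_sols_def b_of_def by simp
qed

lemma Phi_inv_in_H_sols: "y \<in> G_sols \<iota> n r q \<Longrightarrow> Phi_inv y \<in> H_sols \<iota> n r q u"
proof (induction y)
  case (Pair g b)
  then have G: "G_rels \<iota> n r q g b"
    unfolding G_sols_def by simp
  interpret diagonal_frame \<iota> n r b u q "t_of b"
    by (rule frame_of_G_rels[OF G])
  show ?case
    using H_rels_iff_G_rels[of g "\<lambda>i. if i \<in> {1..n-1} then g i - Bprime \<iota> n r q u (t_of b) i (i+1) else 0"] G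
    unfolding Phi_inv_def H_sols_def by (simp add: t_of_def)
qed

lemma Phi_inv_Phi: "x \<in> H_sols \<iota> n r q u \<Longrightarrow> Phi_inv (Phi \<iota> n r q u x) = x"
proof (induction x)
  case (Pair t T)
  then have H: "H_rels \<iota> n r q u t T" and t0: "\<forall>l. l \<notin> {1..n} \<longrightarrow> t l = 0"
    and T0: "\<forall>i. i \<notin> {1..n-1} \<longrightarrow> T i = 0"
    unfolding H_sols_def by auto
  interpret diagonal_frame \<iota> n r "b_of t" u q t
    by (rule frame_of_H_rels[OF H])
  have t_of_b_of: "t_of (b_of t) = t"
    using t_eq_sum t0 unfolding t_of_def by auto
  show ?case
    using T0 by (simp add: Phi_eq Phi_inv_def t_of_b_of fun_eq_iff)
qed

lemma Phi_Phi_inv: "y \<in> G_sols \<iota> n r q \<Longrightarrow> Phi \<iota> n r q u (Phi_inv y) = y"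
proof (induction y)
  case (Pair g b)
  then have G: "G_rels \<iota> n r q g b" and g0: "\<forall>i. i \<notin> {1..n-1} \<longrightarrow> g i = 0"
    and b0: "\<forall>k. k \<notin> Kset n r \<longrightarrow> b k = 0"
    unfolding G_sols_def by auto
  interpret diagonal_frame \<iota> n r b u q "t_of b"
    by (rule frame_of_G_rels[OF G])
  have b_of_t_of: "b_of (t_of b) = b"
    using bprod_eq_idem b0 unfolding b_of_def by auto
  show ?case
    using g0 by (simp add: Phi_eq Phi_inv_def b_of_t_of fun_eq_iff)
qed

end

theorem theorem3p13:
  fixes \<iota> :: "'a::idom \<Rightarrow> 'b::ring_1"
    and n r :: nat and q :: 'a and u :: "nat \<Rightarrow> 'a"
  assumes "n \<ge> 1" and "r \<ge> 1"
    and "\<exists>y. q * y = 1"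
    and "\<exists>y. Vdelta r u * y = 1"
    and "R_algebra \<iota>"
  shows "bij_betw (Phi \<iota> n r q u) (H_sols \<iota> n r q u) (G_sols \<iota> n r q)"
proof -
  interpret presentation_setting \<iota> r u n q
    by unfold_locales (use assms in auto)
  show ?thesis
    by (rule bij_betwI[where g = Phi_inv]) (auto intro: Phi_in_G_sols Phi_inv_in_H_sols Phi_inv_Phi Phi_Phi_inv)
qed

end
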